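(* Let $a,b,c,d>0$ and, on $\mathbb R^2$, let $G_B(0)=0$ and $G_B(u)=\frac{1}{|u|}\big((au_1^2+bu_2^2)u_1,\ (cu_1^2+du_2^2)u_2\big)$ for $u\ne0$. For $w\in\mathbb R^2$ set $|w|_1=(aw_1^2+bw_2^2)^{1/2}$, $|w|_2=(cw_1^2+dw_2^2)^{1/2}$. (i) If either $$\Big[b+c-\tfrac{(|w|_1+|w|_2)^2}{2}\Big]^2\le 4ad\ \text{ for all } w\in\mathbb R^2,\ |w|=1,$$ or $$\Big[b+c-\tfrac{(|w|_1-|w|_2)^2}{2}\Big]^2\le 4ad\ \text{ for all } w\in\mathbb R^2,\ |w|=1,$$ then $G_B$ is monotone. (ii) If either of these two conditions holds with strict inequality for all unit $w$, then $G_B$ is $3$-monotone.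
   Context: A map $F:\mathbb R^n\to\mathbb R^n$ is monotone if $(F(u)-F(v))\cdot(u-v)\ge0$ for all $u,v$; for $\alpha>0$ it is $\alpha$-monotone if there is $C>0$ with $(F(u)-F(v))\cdot(u-v)\ge C|u-v|^\alpha$ for all $u,v\in\mathbb R^n$. $|\cdot|$ is the Euclidean norm. *)

theory Defs
  imports "HOL-Analysis.Analysis"
begin

definition monotone_map :: "('a::real_inner \<Rightarrow> 'a) \<Rightarrow> bool" where
  "monotone_map F \<longleftrightarrow> (\<forall>u v. (F u - F v) \<bullet> (u - v) \<ge> 0)"

definition alpha_monotone :: "real \<Rightarrow> ('a::real_inner \<Rightarrow> 'a) \<Rightarrow> bool" where
  "alpha_monotone \<alpha> F \<longleftrightarrow>
     (\<exists>C>0. \<forall>u v. (F u - F v) \<bullet> (u - v) \<ge> C * norm (u - v) powr \<alpha>)"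

definition G_B :: "real \<Rightarrow> real \<Rightarrow> real \<Rightarrow> real \<Rightarrow> real^2 \<Rightarrow> real^2" where
  "G_B a b c d u =
     (if u = 0 then 0
      else (1 / norm u) *\<^sub>R
        (vector [(a * (u$1)^2 + b * (u$2)^2) * u$1,
                 (c * (u$1)^2 + d * (u$2)^2) * u$2] :: real^2))"

definition norm1 :: "real \<Rightarrow> real \<Rightarrow> real^2 \<Rightarrow> real" where
  "norm1 a b w = sqrt (a * (w$1)^2 + b * (w$2)^2)"

definition norm2 :: "real \<Rightarrow> real \<Rightarrow> real^2 \<Rightarrow> real" where
  "norm2 c d w = sqrt (c * (w$1)^2 + d * (w$2)^2)"

end

theory Submission
  imports Defs
begin

text \<open>
  Fix \<open>u, v\<close>, put \<open>h = u - v\<close> and \<open>\<phi>(t) = G_B(v + t h) \<bullet> h\<close>, so that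
  \<open>(G_B u - G_B v) \<bullet> (u - v) = \<phi>(1) - \<phi>(0)\<close>. Away from the origin
  \<open>\<phi>'(t) = Q(x, h) / |x|\<^sup>3\<close> with \<open>x = v + t h\<close>, where \<open>Q(x, h) = |x|\<^sup>3 DG_B(x) h \<bullet> h\<close> is
  a quadratic form in \<open>h\<close>, homogeneous of degree 4 in \<open>x\<close>. For a unit vector \<open>w\<close> its
  discriminant is
  \<open>w\<^sub>1\<^sup>2 w\<^sub>2\<^sup>2 ((2\<surd>(ad) + |w|\<^sub>1|w|\<^sub>2)\<^sup>2 - k\<^sup>2) + 2 (\<surd>d w\<^sub>2\<^sup>2 |w|\<^sub>1 - \<surd>a w\<^sub>1\<^sup>2 |w|\<^sub>2)\<^sup>2\<close>
  with \<open>k = b + c - (|w|\<^sub>1\<^sup>2 + |w|\<^sub>2\<^sup>2) / 2\<close>, and either hypothesis says precisely that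
  \<open>|k \<mp> |w|\<^sub>1|w|\<^sub>2| \<le> 2\<surd>(ad)\<close>, hence \<open>|k| \<le> 2\<surd>(ad) + |w|\<^sub>1|w|\<^sub>2\<close>. So \<open>Q \<ge> 0\<close>; under the strict
  hypotheses compactness of the unit circle gives \<open>Q(x, h) \<ge> \<mu> |x|\<^sup>4 |h|\<^sup>2\<close> with \<open>\<mu> > 0\<close>.
  Since \<open>|v + t h| \<ge> |h| |t - t\<^sub>0|\<close> for the foot point \<open>t\<^sub>0\<close>, this yields
  \<open>\<phi>' \<ge> \<mu> |h|\<^sup>3 |t - t\<^sub>0|\<close>, and integrating over \<open>[0, 1]\<close> gives
  \<open>\<phi>(1) - \<phi>(0) \<ge> \<mu> |h|\<^sup>3 / 4\<close>. The origin, where \<open>G_B\<close> is merely continuous, is at most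
  one point of the segment and is bridged by continuity.
\<close>

lemma DERIV_nonneg_imp_increasing_except:
  fixes f :: "real \<Rightarrow> real"
  assumes "x \<le> y" and cont: "continuous_on {x..y} f"
    and deriv: "\<And>t. x < t \<Longrightarrow> t < y \<Longrightarrow> t \<noteq> c \<Longrightarrow> \<exists>D. DERIV f t :> D \<and> 0 \<le> D"
  shows "f x \<le> f y"
proof -
  have mono: "f r \<le> f s"
    if "x \<le> r" "r \<le> s" "s \<le> y" "c \<notin> {r<..<s}" for r s
  proof (rule DERIV_nonneg_imp_increasing_open[OF \<open>r \<le> s\<close>])
    show "continuous_on {r..s} f"
      using that by (intro continuous_on_subset[OF cont]) auto
    show "\<exists>D. DERIV f t :> D \<and> 0 \<le> D" if "r < t" "t < s" for t
      using that \<open>x \<le> r\<close> \<open>s \<le> y\<close> \<open>c \<notin> {r<..<s}\<close> by (intro deriv) auto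
  qed
  show ?thesis
  proof (cases "c \<in> {x<..<y}")
    case True
    then show ?thesis
      using mono[of x c] mono[of c y] by fastforce
  qed (use mono[of x y] \<open>x \<le> y\<close> in simp)
qed

lemma DERIV_signed_square:
  fixes t c :: real
  assumes "t \<noteq> c"
  shows "((\<lambda>s. (s - c) * \<bar>s - c\<bar>) has_real_derivative 2 * \<bar>t - c\<bar>) (at t)"
proof (cases "t > c")
  case True
  have "((\<lambda>s. (s - c) * (s - c)) has_real_derivative 2 * \<bar>t - c\<bar>) (at t)"
    using True by (auto intro!: derivative_eq_intros)
  then show ?thesis
    by (rule has_field_derivative_transform_within_open[where S = "{c<..}"]) (use True in auto)
next
  case False
  have "((\<lambda>s. - ((s - c) * (s - c))) has_real_derivative 2 * \<bar>t - c\<bar>) (at t)"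
    using False assms by (auto intro!: derivative_eq_intros)
  then show ?thesis
    by (rule has_field_derivative_transform_within_open[where S = "{..<c}"])
      (use False assms in \<open>auto simp: algebra_simps\<close>)
qed

lemma signed_square_increment_ge:
  fixes r s :: real
  assumes "r \<le> s"
  shows "(s - r)^2 / 2 \<le> s * \<bar>s\<bar> - r * \<bar>r\<bar>"
proof -
  have "(s - r)^2 / 2 \<le> (s - r) * (s + r)" if "0 \<le> r"
  proof -
    have "(s - r) * (s - r) \<le> (s - r) * (s + r)" using that assms by (intro mult_left_mono) auto
    moreover have "0 \<le> (s - r) * (s + r)" using that assms by simp
    ultimately show ?thesis by (simp add: power2_eq_square)
  qed
  moreover have "(s - r)^2 / 2 \<le> (s - r) * (- s - r)" if "s \<le> 0"
  proof -
    have "(s - r) * (s - r) \<le> (s - r) * (- s - r)" using that assms by (intro mult_left_mono) auto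
    moreover have "0 \<le> (s - r) * (- s - r)" using that assms by simp
    ultimately show ?thesis by (simp add: power2_eq_square)
  qed
  moreover have "(s - r)^2 / 2 \<le> s^2 + r^2"
    using zero_le_power2[of "s + r"] by (simp add: power2_eq_square algebra_simps)
  ultimately show ?thesis
    using assms by (cases "0 \<le> r"; cases "0 \<le> s") (auto simp: power2_eq_square algebra_simps)
qed

lemma increment_ge_of_DERIV_ge_dist:
  fixes f f' :: "real \<Rightarrow> real"
  assumes "x \<le> y" "0 \<le> E" and cont: "continuous_on {x..y} f"
    and deriv: "\<And>t. x < t \<Longrightarrow> t < y \<Longrightarrow> t \<noteq> c \<Longrightarrow>
                  DERIV f t :> f' t \<and> E * \<bar>t - c\<bar> \<le> f' t"
  shows "E * (y - x)^2 / 4 \<le> f y - f x"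
proof -
  \<comment> \<open>\<open>(t - c) * \<bar>t - c\<bar> / 2\<close> is an antiderivative of \<open>\<bar>t - c\<bar>\<close>, so \<open>g\<close> is nondecreasing\<close>
  define g where "g t = f t - E / 2 * ((t - c) * \<bar>t - c\<bar>)" for t
  have "g x \<le> g y"
  proof (rule DERIV_nonneg_imp_increasing_except[OF \<open>x \<le> y\<close>])
    show "continuous_on {x..y} g"
      unfolding g_def by (intro continuous_intros cont)
    fix t assume t: "x < t" "t < y" "t \<noteq> c"
    have "DERIV g t :> f' t - E / 2 * (2 * \<bar>t - c\<bar>)"
      unfolding g_def
      using DERIV_diff[OF _ DERIV_cmult[OF DERIV_signed_square[OF \<open>t \<noteq> c\<close>]]] deriv[OF t] by blast
    then show "\<exists>D. DERIV g t :> D \<and> 0 \<le> D"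
      using deriv[OF t] by auto
  qed
  moreover have "E / 2 * ((y - x)^2 / 2) \<le> E / 2 * ((y - c) * \<bar>y - c\<bar> - (x - c) * \<bar>x - c\<bar>)"
    using signed_square_increment_ge[of "x - c" "y - c"] \<open>x \<le> y\<close> \<open>0 \<le> E\<close>
    by (intro mult_left_mono) auto
  ultimately show ?thesis
    unfolding g_def by (simp add: algebra_simps)
qed

lemma norm_line_ge:
  fixes v h :: "'a::real_inner"
  shows "norm h * \<bar>t + (v \<bullet> h) / (h \<bullet> h)\<bar> \<le> norm (v + t *\<^sub>R h)"
proof (cases "h = 0")
  case False
  define c where "c = (v \<bullet> h) / (h \<bullet> h)"
  have orth: "orthogonal ((t + c) *\<^sub>R h) (v - c *\<^sub>R h)"
    using False by (simp add: orthogonal_def c_def inner_diff_right inner_commute)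
  have eq: "v + t *\<^sub>R h = (t + c) *\<^sub>R h + (v - c *\<^sub>R h)"
    by (simp add: scaleR_add_left)
  have "norm (v + t *\<^sub>R h) ^ 2 = norm ((t + c) *\<^sub>R h) ^ 2 + norm (v - c *\<^sub>R h) ^ 2"
    unfolding eq by (rule norm_add_Pythagorean[OF orth])
  then have "(norm h * \<bar>t + c\<bar>) ^ 2 \<le> norm (v + t *\<^sub>R h) ^ 2"
    by (simp add: power_mult_distrib mult.commute)
  then show ?thesis
    unfolding c_def[symmetric] by (rule power2_le_imp_le) simp
qed simp

lemma quadratic_form_ge:
  fixes A B K h1 h2 :: real
  assumes "0 < A + B"
  shows "(A * B - K^2) / (A + B) * (h1^2 + h2^2) \<le> A * h1^2 + 2 * K * h1 * h2 + B * h2^2"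
proof -
  have "(A + B) * (A * h1^2 + 2 * K * h1 * h2 + B * h2^2)
      = (A * B - K^2) * (h1^2 + h2^2) + (A * h1 + K * h2)^2 + (K * h1 + B * h2)^2"
    by algebra
  then have "(A * B - K^2) * (h1^2 + h2^2) \<le> (A + B) * (A * h1^2 + 2 * K * h1 * h2 + B * h2^2)"
    by (simp add: add_increasing2)
  then show ?thesis
    using assms by (simp add: pos_divide_le_eq mult.commute)
qed

lemma abs_le_add_if_shifted_square_le:
  fixes k p m :: real
  assumes "0 \<le> p" "0 \<le> m" "(k - p)^2 \<le> m^2 \<or> (k + p)^2 \<le> m^2"
  shows "\<bar>k\<bar> \<le> m + p"
proof -
  have "\<bar>k - p\<bar> \<le> m \<or> \<bar>k + p\<bar> \<le> m"
    using assms by (metis abs_le_square_iff abs_of_nonneg)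
  then show ?thesis
    using \<open>0 \<le> p\<close> by arith
qed

lemma abs_less_add_if_shifted_square_less:
  fixes k p m :: real
  assumes "0 \<le> p" "0 \<le> m" "(k - p)^2 < m^2 \<or> (k + p)^2 < m^2"
  shows "\<bar>k\<bar> < m + p"
proof -
  have "\<bar>k - p\<bar> < m \<or> \<bar>k + p\<bar> < m"
    using assms power2_less_imp_less[of "\<bar>k - p\<bar>" m] power2_less_imp_less[of "\<bar>k + p\<bar>" m] by auto
  then show ?thesis
    using \<open>0 \<le> p\<close> by arith
qed

lemma norm_real2: "norm (x :: real^2) = sqrt ((x$1)^2 + (x$2)^2)"
  by (simp add: norm_vec_def L2_set_def sum_2)

lemma inner_real2: "(x :: real^2) \<bullet> y = x$1 * y$1 + x$2 * y$2"
  by (simp add: inner_vec_def sum_2)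

lemma unit_real2: "norm (w :: real^2) = 1 \<Longrightarrow> (w$1)^2 + (w$2)^2 = 1"
  by (simp add: norm_real2)

lemma inner_G_B:
  "G_B a b c d x \<bullet> h =
     ((a * (x$1)^2 + b * (x$2)^2) * x$1 * h$1 + (c * (x$1)^2 + d * (x$2)^2) * x$2 * h$2) / norm x"
  by (cases "x = 0") (simp_all add: G_B_def inner_real2 field_simps)

lemma norm_G_B_le: "norm (G_B a b c d x) \<le> (\<bar>a\<bar> + \<bar>b\<bar> + \<bar>c\<bar> + \<bar>d\<bar>) * norm x ^ 2"
proof (cases "x = 0")
  case False
  have sq: "(x$i)^2 \<le> norm x ^ 2" for i
    using power_mono[OF component_le_norm_cart[of x i], of 2] by simp
  have "\<bar>p * (x$1)^2 + q * (x$2)^2\<bar> \<le> (\<bar>p\<bar> + \<bar>q\<bar>) * norm x ^ 2" for p q :: real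
  proof -
    have "\<bar>p * (x$1)^2 + q * (x$2)^2\<bar> \<le> \<bar>p\<bar> * (x$1)^2 + \<bar>q\<bar> * (x$2)^2"
      by (simp add: abs_mult abs_triangle_ineq[THEN order_trans])
    also have "\<dots> \<le> (\<bar>p\<bar> + \<bar>q\<bar>) * norm x ^ 2"
      unfolding distrib_right by (intro add_mono mult_left_mono sq abs_ge_zero)
    finally show ?thesis .
  qed
  then have comp: "\<bar>(p * (x$1)^2 + q * (x$2)^2) * x$i\<bar> \<le> (\<bar>p\<bar> + \<bar>q\<bar>) * norm x ^ 2 * norm x"
    for p q i
    unfolding abs_mult by (intro mult_mono component_le_norm_cart) auto
  define y :: "real^2" where
    "y = vector [(a * (x$1)^2 + b * (x$2)^2) * x$1, (c * (x$1)^2 + d * (x$2)^2) * x$2]"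
  have "norm y \<le> (\<bar>a\<bar> + \<bar>b\<bar>) * norm x ^ 2 * norm x + (\<bar>c\<bar> + \<bar>d\<bar>) * norm x ^ 2 * norm x"
    using norm_le_l1_cart[of y] comp[of a b 1] comp[of c d 2] by (simp add: y_def sum_2)
  moreover have "G_B a b c d x = (1 / norm x) *\<^sub>R y"
    using False by (simp add: G_B_def y_def)
  ultimately show ?thesis
    using False by (simp add: divide_le_eq algebra_simps)
qed (simp add: G_B_def)

lemma isCont_G_B_zero: "isCont (G_B a b c d) 0"
proof -
  have "(G_B a b c d \<longlongrightarrow> 0) (at 0)"
    by (rule Lim_null_comparison[OF always_eventually[OF allI[OF norm_G_B_le]]])
      (auto intro!: tendsto_eq_intros)
  then show ?thesis
    by (simp add: isCont_def G_B_def)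
qed

text \<open>\<open>G_B_form a b c d x h = norm x ^ 3 * (DG_B(x) h \<bullet> h)\<close>, see \<open>DERIV_G_B_line\<close>.\<close>

definition G_B_form :: "real \<Rightarrow> real \<Rightarrow> real \<Rightarrow> real \<Rightarrow> real^2 \<Rightarrow> real^2 \<Rightarrow> real" where
  "G_B_form a b c d x h =
     ((x$2)^2 * (a * (x$1)^2 + b * (x$2)^2) + 2 * a * (x$1)^2 * ((x$1)^2 + (x$2)^2)) * (h$1)^2
   + x$1 * x$2 * (2 * (b + c) * ((x$1)^2 + (x$2)^2) - (a * (x$1)^2 + b * (x$2)^2)
                  - (c * (x$1)^2 + d * (x$2)^2)) * h$1 * h$2
   + ((x$1)^2 * (c * (x$1)^2 + d * (x$2)^2) + 2 * d * (x$2)^2 * ((x$1)^2 + (x$2)^2)) * (h$2)^2"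

lemma DERIV_G_B_line:
  fixes v h :: "real^2"
  assumes "v + t *\<^sub>R h \<noteq> 0"
  shows "((\<lambda>s. G_B a b c d (v + s *\<^sub>R h) \<bullet> h) has_real_derivative
           G_B_form a b c d (v + t *\<^sub>R h) h / norm (v + t *\<^sub>R h) ^ 3) (at t)"
proof -
  define x where "x s = v + s *\<^sub>R h" for s
  define p where "p s = (a * (x s$1)^2 + b * (x s$2)^2) * x s$1 * h$1
                      + (c * (x s$1)^2 + d * (x s$2)^2) * x s$2 * h$2" for s
  define q where "q s = (x s$1)^2 + (x s$2)^2" for s
  define p' where "p' = (3 * a * (x t$1)^2 * h$1 + b * (x t$2)^2 * h$1 + 2 * b * x t$1 * x t$2 * h$2) * h$1
                      + (2 * c * x t$1 * x t$2 * h$1 + c * (x t$1)^2 * h$2 + 3 * d * (x t$2)^2 * h$2) * h$2"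
  define q' where "q' = 2 * (x t$1 * h$1 + x t$2 * h$2)"
  have x_nth: "x s$i = v$i + s * h$i" for s i
    by (simp add: x_def)
  have norm_x: "norm (x s) = sqrt (q s)" for s
    by (simp add: q_def norm_real2)
  have "0 < q t"
    using assms norm_x[of t] by (metis real_sqrt_gt_0_iff zero_less_norm_iff x_def)
  have dp: "DERIV p t :> p'"
    unfolding p_def x_nth by (rule derivative_eq_intros refl)+ (simp add: p'_def x_nth algebra_simps power2_eq_square)
  have dq: "DERIV q t :> q'"
    unfolding q_def x_nth by (rule derivative_eq_intros refl)+ (simp add: q'_def x_nth algebra_simps)
  have "DERIV (\<lambda>s. sqrt (q s)) t :> inverse (sqrt (q t)) / 2 * q'"
    by (rule DERIV_chain2[OF DERIV_real_sqrt[OF \<open>0 < q t\<close>] dq])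
  from DERIV_quotient[OF dp this]
  have "DERIV (\<lambda>s. p s / sqrt (q s)) t
          :> (p' * sqrt (q t) - p t * (inverse (sqrt (q t)) / 2 * q')) / sqrt (q t) ^ 2"
    using \<open>0 < q t\<close> by (simp add: mult.commute)
  moreover have "(p' * sqrt (q t) - p t * (inverse (sqrt (q t)) / 2 * q')) / sqrt (q t) ^ 2
      = (p' * q t - p t * q' / 2) / sqrt (q t) ^ 3"
    using \<open>0 < q t\<close> by (simp add: field_simps power2_eq_square power3_eq_cube)
  moreover have "p' * q t - p t * q' / 2 = G_B_form a b c d (x t) h"
    unfolding p'_def q'_def p_def q_def G_B_form_def by (simp add: algebra_simps power2_eq_square)
  ultimately show ?thesis
    by (simp add: inner_G_B p_def flip: norm_x x_def)
qed

lemma G_B_inner_diff_ge: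
  assumes "0 \<le> \<mu>"
    and form_ge: "\<And>x h. \<mu> * norm x ^ 4 * norm h ^ 2 \<le> G_B_form a b c d x h"
  shows "\<mu> / 4 * norm (u - v) ^ 3 \<le> (G_B a b c d u - G_B a b c d v) \<bullet> (u - v)"
proof (cases "u = v")
  case False
  define h where "h = u - v"
  define \<phi> where "\<phi> s = G_B a b c d (v + s *\<^sub>R h) \<bullet> h" for s
  \<comment> \<open>the foot of the perpendicular from 0 to the line, the only place where it can meet 0\<close>
  define t0 where "t0 = - (v \<bullet> h) / (h \<bullet> h)"
  have "h \<noteq> 0"
    using False by (simp add: h_def)
  have dist_t0: "norm h * \<bar>t - t0\<bar> \<le> norm (v + t *\<^sub>R h)" for t
    using norm_line_ge[where v = v and h = h and t = t] by (simp add: t0_def)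
  have "\<mu> * norm h ^ 3 * (1 - 0)^2 / 4 \<le> \<phi> 1 - \<phi> 0"
  proof (rule increment_ge_of_DERIV_ge_dist[where c = t0])
    show "0 \<le> \<mu> * norm h ^ 3"
      using \<open>0 \<le> \<mu>\<close> by simp
    have "isCont \<phi> t" for t
    proof (cases "v + t *\<^sub>R h = 0")
      case True
      have "isCont (\<lambda>s. v + s *\<^sub>R h) t"
        by (intro continuous_intros)
      moreover have "isCont (G_B a b c d) (v + t *\<^sub>R h)"
        using True isCont_G_B_zero by simp
      ultimately have "isCont (\<lambda>s. G_B a b c d (v + s *\<^sub>R h)) t"
        by (rule isCont_o2)
      then show ?thesis
        unfolding \<phi>_def by (intro continuous_intros)
    next
      case False
      then show ?thesis
        unfolding \<phi>_def by (rule DERIV_isCont[OF DERIV_G_B_line])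
    qed
    then show "continuous_on {0..1} \<phi>"
      by (simp add: continuous_at_imp_continuous_on)
    fix t assume "t \<noteq> t0"
    define x where "x = v + t *\<^sub>R h"
    have "0 < norm h * \<bar>t - t0\<bar>"
      using \<open>h \<noteq> 0\<close> \<open>t \<noteq> t0\<close> by simp
    then have "0 < norm x"
      using dist_t0[of t] unfolding x_def by linarith
    have "\<mu> * norm h ^ 3 * \<bar>t - t0\<bar> = \<mu> * norm h ^ 2 * (norm h * \<bar>t - t0\<bar>)"
      by (simp add: power3_eq_cube power2_eq_square)
    also have "\<dots> \<le> \<mu> * norm h ^ 2 * norm x"
      using \<open>0 \<le> \<mu>\<close> by (intro mult_left_mono[OF dist_t0[of t, folded x_def]]) simp
    also have "\<dots> = \<mu> * norm x ^ 4 * norm h ^ 2 / norm x ^ 3"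
      using \<open>0 < norm x\<close> by (simp add: power_numeral_reduce)
    also have "\<dots> \<le> G_B_form a b c d x h / norm x ^ 3"
      using \<open>0 < norm x\<close> form_ge by (simp add: divide_right_mono)
    finally show "DERIV \<phi> t :> G_B_form a b c d x h / norm x ^ 3
        \<and> \<mu> * norm h ^ 3 * \<bar>t - t0\<bar> \<le> G_B_form a b c d x h / norm x ^ 3"
      using DERIV_G_B_line[of v t h] \<open>0 < norm x\<close> unfolding \<phi>_def x_def by simp
  qed simp
  moreover have "\<phi> 1 - \<phi> 0 = (G_B a b c d u - G_B a b c d v) \<bullet> (u - v)"
    by (simp add: \<phi>_def h_def inner_diff_left)
  ultimately show ?thesis
    by (simp add: h_def)
qed simp

lemma G_B_form_scaleR: "G_B_form a b c d (r *\<^sub>R x) h = r ^ 4 * G_B_form a b c d x h"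
  unfolding G_B_form_def by simp algebra

lemma G_B_form_ge_of_unit:
  assumes unit: "\<And>w h. norm w = 1 \<Longrightarrow> \<mu> * norm h ^ 2 \<le> G_B_form a b c d w h"
  shows "\<mu> * norm x ^ 4 * norm h ^ 2 \<le> G_B_form a b c d x h"
proof (cases "x = 0")
  case True
  then show ?thesis
    by (simp add: G_B_form_def)
next
  case False
  then have "x = norm x *\<^sub>R sgn x" "norm (sgn x) = 1"
    by (simp_all add: sgn_div_norm norm_sgn)
  then have "G_B_form a b c d x h = norm x ^ 4 * G_B_form a b c d (sgn x) h"
    by (metis G_B_form_scaleR)
  moreover have "norm x ^ 4 * (\<mu> * norm h ^ 2) \<le> norm x ^ 4 * G_B_form a b c d (sgn x) h"
    using unit[OF \<open>norm (sgn x) = 1\<close>] by (simp add: mult_left_mono)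
  ultimately show ?thesis
    by (simp add: mult_ac)
qed

definition G_B_coeff11 :: "real \<Rightarrow> real \<Rightarrow> real^2 \<Rightarrow> real" where
  "G_B_coeff11 a b w = (w$2)^2 * (a * (w$1)^2 + b * (w$2)^2) + 2 * a * (w$1)^2"

definition G_B_coeff22 :: "real \<Rightarrow> real \<Rightarrow> real^2 \<Rightarrow> real" where
  "G_B_coeff22 c d w = (w$1)^2 * (c * (w$1)^2 + d * (w$2)^2) + 2 * d * (w$2)^2"

definition G_B_coupling :: "real \<Rightarrow> real \<Rightarrow> real \<Rightarrow> real \<Rightarrow> real^2 \<Rightarrow> real" where
  "G_B_coupling a b c d w = b + c - ((a * (w$1)^2 + b * (w$2)^2) + (c * (w$1)^2 + d * (w$2)^2)) / 2"

definition G_B_discriminant :: "real \<Rightarrow> real \<Rightarrow> real \<Rightarrow> real \<Rightarrow> real^2 \<Rightarrow> real" where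
  "G_B_discriminant a b c d w =
     G_B_coeff11 a b w * G_B_coeff22 c d w - (w$1 * w$2 * G_B_coupling a b c d w)^2"

lemma G_B_form_unit:
  assumes "norm w = 1"
  shows "G_B_form a b c d w h = G_B_coeff11 a b w * (h$1)^2
           + 2 * (w$1 * w$2 * G_B_coupling a b c d w) * h$1 * h$2 + G_B_coeff22 c d w * (h$2)^2"
  using unit_real2[OF assms]
  by (simp add: G_B_form_def G_B_coeff11_def G_B_coeff22_def G_B_coupling_def algebra_simps)

lemma G_B_coeff11_pos:
  assumes "0 < a" "0 < b" "norm w = 1"
  shows "0 < G_B_coeff11 a b w"
proof (cases "w$1 = 0")
  case True
  then show ?thesis
    using assms unit_real2[OF assms(3)] by (simp add: G_B_coeff11_def)
next
  case False
  then show ?thesis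
    using assms by (simp add: G_B_coeff11_def add_nonneg_pos)
qed

lemma G_B_coeff22_pos:
  assumes "0 < c" "0 < d" "norm w = 1"
  shows "0 < G_B_coeff22 c d w"
proof (cases "w$2 = 0")
  case True
  then show ?thesis
    using assms unit_real2[OF assms(3)] by (simp add: G_B_coeff22_def)
next
  case False
  then show ?thesis
    using assms by (simp add: G_B_coeff22_def add_nonneg_pos)
qed

lemma G_B_form_unit_ge:
  assumes "0 < a" "0 < b" "0 < c" "0 < d" "norm w = 1"
  shows "G_B_discriminant a b c d w / (G_B_coeff11 a b w + G_B_coeff22 c d w) * norm h ^ 2
           \<le> G_B_form a b c d w h"
  using quadratic_form_ge[of "G_B_coeff11 a b w" "G_B_coeff22 c d w"]
    G_B_coeff11_pos[of a b w] G_B_coeff22_pos[of c d w] assms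
  by (simp add: G_B_form_unit G_B_discriminant_def norm_real2)

lemma G_B_form_unit_nonneg:
  assumes "0 < a" "0 < b" "0 < c" "0 < d" "norm w = 1" "0 \<le> G_B_discriminant a b c d w"
  shows "0 \<le> G_B_form a b c d w h"
proof -
  have "0 \<le> G_B_discriminant a b c d w / (G_B_coeff11 a b w + G_B_coeff22 c d w) * norm h ^ 2"
    using assms G_B_coeff11_pos[of a b w] G_B_coeff22_pos[of c d w] by simp
  then show ?thesis
    using G_B_form_unit_ge[OF assms(1-5)] by (rule order_trans)
qed

lemma G_B_discriminant_eq:
  assumes "0 \<le> a" "0 \<le> b" "0 \<le> c" "0 \<le> d" "norm w = 1"
  shows "G_B_discriminant a b c d w =
           (w$1 * w$2)^2 * ((2 * sqrt a * sqrt d + norm1 a b w * norm2 c d w)^2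
                            - (G_B_coupling a b c d w)^2)
         + 2 * (sqrt d * (w$2)^2 * norm1 a b w - sqrt a * (w$1)^2 * norm2 c d w)^2"
proof -
  define X Y p q where "X = norm1 a b w" and "Y = norm2 c d w" and "p = sqrt a" and "q = sqrt d"
  have XY: "X^2 = a * (w$1)^2 + b * (w$2)^2" "Y^2 = c * (w$1)^2 + d * (w$2)^2"
    using assms by (simp_all add: X_def Y_def norm1_def norm2_def)
  have pq: "p^2 = a" "q^2 = d"
    using assms by (simp_all add: p_def q_def)
  have "G_B_coeff11 a b w = (w$2)^2 * X^2 + 2 * p^2 * (w$1)^2"
    unfolding G_B_coeff11_def XY pq ..
  moreover have "G_B_coeff22 c d w = (w$1)^2 * Y^2 + 2 * q^2 * (w$2)^2"
    unfolding G_B_coeff22_def XY pq ..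
  moreover have "G_B_coupling a b c d w = b + c - (X^2 + Y^2) / 2"
    unfolding G_B_coupling_def XY ..
  moreover have "(w$1 * w$2)^2 = (w$1 * w$2)^2 * ((w$1)^2 + (w$2)^2)^2"
    using unit_real2[OF assms(5)] by simp
  ultimately show ?thesis
    unfolding G_B_discriminant_def X_def[symmetric] Y_def[symmetric] p_def[symmetric] q_def[symmetric]
    by (simp add: algebra_simps power2_eq_square)
qed

lemma G_B_coupling_norms:
  assumes "0 \<le> a" "0 \<le> b" "0 \<le> c" "0 \<le> d"
  shows "b + c - (norm1 a b w + norm2 c d w)^2 / 2 = G_B_coupling a b c d w - norm1 a b w * norm2 c d w"
    and "b + c - (norm1 a b w - norm2 c d w)^2 / 2 = G_B_coupling a b c d w + norm1 a b w * norm2 c d w"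
  using assms by (simp_all add: G_B_coupling_def norm1_def norm2_def power2_sum power2_diff field_simps)

lemma four_mul_eq_sqrt_square:
  assumes "0 \<le> a" "0 \<le> d"
  shows "4 * a * d = (2 * sqrt a * sqrt d)^2"
  using assms by (simp add: power_mult_distrib)

lemma abs_G_B_coupling_le:
  assumes "0 \<le> a" "0 \<le> b" "0 \<le> c" "0 \<le> d"
    and "(b + c - (norm1 a b w + norm2 c d w)^2 / 2)^2 \<le> 4 * a * d
         \<or> (b + c - (norm1 a b w - norm2 c d w)^2 / 2)^2 \<le> 4 * a * d"
  shows "\<bar>G_B_coupling a b c d w\<bar> \<le> 2 * sqrt a * sqrt d + norm1 a b w * norm2 c d w"
proof (rule abs_le_add_if_shifted_square_le)
  show "0 \<le> norm1 a b w * norm2 c d w"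
    using assms by (simp add: norm1_def norm2_def)
  show "(G_B_coupling a b c d w - norm1 a b w * norm2 c d w)^2 \<le> (2 * sqrt a * sqrt d)^2
      \<or> (G_B_coupling a b c d w + norm1 a b w * norm2 c d w)^2 \<le> (2 * sqrt a * sqrt d)^2"
    using assms(5) unfolding G_B_coupling_norms[OF assms(1-4)] four_mul_eq_sqrt_square[OF assms(1,4)] .
qed (use assms in simp)

lemma abs_G_B_coupling_less:
  assumes "0 \<le> a" "0 \<le> b" "0 \<le> c" "0 \<le> d"
    and "(b + c - (norm1 a b w + norm2 c d w)^2 / 2)^2 < 4 * a * d
         \<or> (b + c - (norm1 a b w - norm2 c d w)^2 / 2)^2 < 4 * a * d"
  shows "\<bar>G_B_coupling a b c d w\<bar> < 2 * sqrt a * sqrt d + norm1 a b w * norm2 c d w"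
proof (rule abs_less_add_if_shifted_square_less)
  show "0 \<le> norm1 a b w * norm2 c d w"
    using assms by (simp add: norm1_def norm2_def)
  show "(G_B_coupling a b c d w - norm1 a b w * norm2 c d w)^2 < (2 * sqrt a * sqrt d)^2
      \<or> (G_B_coupling a b c d w + norm1 a b w * norm2 c d w)^2 < (2 * sqrt a * sqrt d)^2"
    using assms(5) unfolding G_B_coupling_norms[OF assms(1-4)] four_mul_eq_sqrt_square[OF assms(1,4)] .
qed (use assms in simp)

lemma G_B_discriminant_nonneg:
  assumes "0 \<le> a" "0 \<le> b" "0 \<le> c" "0 \<le> d" "norm w = 1"
    and "\<bar>G_B_coupling a b c d w\<bar> \<le> 2 * sqrt a * sqrt d + norm1 a b w * norm2 c d w"
  shows "0 \<le> G_B_discriminant a b c d w"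
proof -
  have "(G_B_coupling a b c d w)^2 \<le> (2 * sqrt a * sqrt d + norm1 a b w * norm2 c d w)^2"
    using power_mono[OF assms(6) abs_ge_zero, of 2] by simp
  then show ?thesis
    using assms by (simp add: G_B_discriminant_eq)
qed

lemma G_B_discriminant_pos:
  assumes "0 < a" "0 < b" "0 < c" "0 < d" "norm w = 1"
    and "\<bar>G_B_coupling a b c d w\<bar> < 2 * sqrt a * sqrt d + norm1 a b w * norm2 c d w"
  shows "0 < G_B_discriminant a b c d w"
proof (cases "w$1 * w$2 = 0")
  case True
  then have coupling_term: "w$1 * w$2 * G_B_coupling a b c d w = 0"
    by simp
  show ?thesis
    unfolding G_B_discriminant_def coupling_term
    using G_B_coeff11_pos[of a b w] G_B_coeff22_pos[of c d w] assms by simp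
next
  case False
  have "(G_B_coupling a b c d w)^2 < (2 * sqrt a * sqrt d + norm1 a b w * norm2 c d w)^2"
    using power_strict_mono[OF assms(6) abs_ge_zero, of 2] by simp
  then have "0 < (w$1 * w$2)^2 * ((2 * sqrt a * sqrt d + norm1 a b w * norm2 c d w)^2
                                   - (G_B_coupling a b c d w)^2)"
    using False by simp
  then show ?thesis
    using assms by (simp add: G_B_discriminant_eq add_pos_nonneg)
qed

lemma G_B_form_unit_coercive:
  assumes "0 < a" "0 < b" "0 < c" "0 < d"
    and disc_pos: "\<And>w. norm w = 1 \<Longrightarrow> 0 < G_B_discriminant a b c d w"
  shows "\<exists>\<mu>>0. \<forall>w h. norm w = 1 \<longrightarrow> \<mu> * norm h ^ 2 \<le> G_B_form a b c d w h"
proof -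
  define f where "f w = G_B_discriminant a b c d w / (G_B_coeff11 a b w + G_B_coeff22 c d w)" for w
  have f_pos: "0 < f w" if "norm w = 1" for w
    using disc_pos[OF that] G_B_coeff11_pos[of a b w] G_B_coeff22_pos[of c d w] assms that
    by (simp add: f_def)
  have "continuous_on (sphere 0 1) f"
    unfolding f_def
  proof (intro continuous_on_divide)
    have "continuous_on (sphere 0 1) (\<lambda>w. G_B_coeff11 a b w * G_B_coeff22 c d w
                                           - (w$1 * w$2 * G_B_coupling a b c d w)^2)"
      unfolding G_B_coeff11_def G_B_coeff22_def G_B_coupling_def by (intro continuous_intros) auto
    then show "continuous_on (sphere 0 1) (G_B_discriminant a b c d)"
      unfolding G_B_discriminant_def[abs_def] .
    show "continuous_on (sphere 0 1) (\<lambda>w. G_B_coeff11 a b w + G_B_coeff22 c d w)"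
      unfolding G_B_coeff11_def G_B_coeff22_def by (intro continuous_intros)
    show "\<forall>w\<in>sphere 0 1. G_B_coeff11 a b w + G_B_coeff22 c d w \<noteq> 0"
      using G_B_coeff11_pos[of a b] G_B_coeff22_pos[of c d] assms by (fastforce simp: add_pos_pos)
  qed
  moreover have "sphere (0 :: real^2) 1 \<noteq> {}"
    by simp
  ultimately obtain w0 where "w0 \<in> sphere 0 1" and "\<forall>w \<in> sphere 0 1. f w0 \<le> f w"
    using continuous_attains_inf[OF compact_sphere] by blast
  then have "norm w0 = 1" and w0_min: "\<And>w. norm w = 1 \<Longrightarrow> f w0 \<le> f w"
    by simp_all
  have "f w0 * norm h ^ 2 \<le> G_B_form a b c d w h" if "norm w = 1" for w h
  proof -
    have "f w0 * norm h ^ 2 \<le> f w * norm h ^ 2"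
      using w0_min[OF that] by (simp add: mult_right_mono)
    also have "\<dots> \<le> G_B_form a b c d w h"
      using G_B_form_unit_ge[OF assms(1-4) that] by (simp add: f_def)
    finally show ?thesis .
  qed
  then show ?thesis
    using f_pos[OF \<open>norm w0 = 1\<close>] by blast
qed

theorem mainTheorem4:
  fixes a b c d :: real
  assumes "a > 0" "b > 0" "c > 0" "d > 0"
  shows "(((\<forall>w::real^2. norm w = 1 \<longrightarrow>
              (b + c - (norm1 a b w + norm2 c d w)^2 / 2)^2 \<le> 4 * a * d)
          \<or> (\<forall>w::real^2. norm w = 1 \<longrightarrow>
              (b + c - (norm1 a b w - norm2 c d w)^2 / 2)^2 \<le> 4 * a * d))
         \<longrightarrow> monotone_map (G_B a b c d))
       \<and> (((\<forall>w::real^2. norm w = 1 \<longrightarrow>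
              (b + c - (norm1 a b w + norm2 c d w)^2 / 2)^2 < 4 * a * d)
          \<or> (\<forall>w::real^2. norm w = 1 \<longrightarrow>
              (b + c - (norm1 a b w - norm2 c d w)^2 / 2)^2 < 4 * a * d))
         \<longrightarrow> alpha_monotone 3 (G_B a b c d))"
proof -
  have nonneg: "0 \<le> a" "0 \<le> b" "0 \<le> c" "0 \<le> d"
    using assms by simp_all
  show ?thesis (is "(?weak \<longrightarrow> _) \<and> (?strict \<longrightarrow> _)")
  proof (intro conjI impI)
    assume weak: ?weak
    have "0 \<le> G_B_form a b c d w h" if "norm w = 1" for w h
      using weak that
      by (intro G_B_form_unit_nonneg G_B_discriminant_nonneg abs_G_B_coupling_le assms nonneg) auto
    then have "0 * norm x ^ 4 * norm h ^ 2 \<le> G_B_form a b c d x h" for x h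
      by (intro G_B_form_ge_of_unit) simp
    then show "monotone_map (G_B a b c d)"
      unfolding monotone_map_def using G_B_inner_diff_ge[of 0] by simp
  next
    assume strict: ?strict
    have "0 < G_B_discriminant a b c d w" if "norm w = 1" for w
      using strict that by (intro G_B_discriminant_pos abs_G_B_coupling_less assms nonneg) auto
    then obtain \<mu> where "0 < \<mu>"
      and unit: "\<And>w h. norm w = 1 \<Longrightarrow> \<mu> * norm h ^ 2 \<le> G_B_form a b c d w h"
      using G_B_form_unit_coercive[OF assms] by blast
    have "\<mu> / 4 * norm (u - v) powr 3 \<le> (G_B a b c d u - G_B a b c d v) \<bullet> (u - v)" for u v
      using G_B_inner_diff_ge[OF _ G_B_form_ge_of_unit[OF unit]] \<open>0 < \<mu>\<close> by simp
    then show "alpha_monotone 3 (G_B a b c d)"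
      unfolding alpha_monotone_def using \<open>0 < \<mu>\<close> by (intro exI[of _ "\<mu> / 4"]) auto
  qed
qed

end
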